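(* With the notation of the context, let $\Sigma:=\sum_{j\in A}\sigma_j$. Then $\Sigma=\frac{|A|}{|G|^k}\sum_{x\in A^k}\sum_{w\in A}\eta^x_w\,|x,S^x_w\rangle\langle x,S^x_w|$, each $\sigma_d$ is a density operator, the pretty good measurement operators $\Sigma^{-1/2}\sigma_j\Sigma^{-1/2}$ (inverse on the support of $\Sigma$) equal $$E_j=\frac{1}{|A|}\sum_{x\in A^k}\sum_{w,v\in A}\chi_w(j)\overline{\chi_v(j)}\,|x,S^x_w\rangle\langle x,S^x_v|,$$ and for every $d\in A$, $$\mathrm{tr}(E_d\sigma_d)=\frac{p}{|G|^{k+1}}\sum_{x\in A^k}\Big(\sum_{w\in A}\sqrt{\eta^x_w}\Big)^2 .$$
   Context: $A$ finite abelian group, $p$ prime, $\varphi\in\mathrm{Aut}(A)$ with $\varphi^p=\mathrm{id}$, $|G|:=p|A|$, $k\ge1$. $\{\chi_x\}_{x\in A}$ are the characters of $A$ indexed so that $\chi_x\chi_{x'}=\chi_{x+x'}$ and $\chi_x(y)=\chi_y(x)$. For $b\in\mathbb{Z}_p$ (identified with $\{0,\dots,p-1\}$) let $\Phi_b:=\sum_{i=0}^{b-1}\varphi^i$ and let $\hat\Phi_b:A\to A$ be a function with $\chi_x(\Phi_b(d))=\chi_{\hat\Phi_b(x)}(d)$ for all $x,d\in A$. For $x\in A^k$, $b\in\mathbb{Z}_p^k$ put $\hat\Phi_b(x):=\sum_{j=1}^k\hat\Phi_{b_j}(x_j)$; $S^x_w:=\{b\in\mathbb{Z}_p^k:\hat\Phi_b(x)=w\}$,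 $\eta^x_w:=|S^x_w|$, $|S^x_w\rangle:=\eta_w^{x\,-1/2}\sum_{b\in S^x_w}|b\rangle$ (and $|S^x_w\rangle:=0$ if $\eta^x_w=0$), vectors in $\mathbb{C}^{A^k}\otimes\mathbb{C}^{\mathbb{Z}_p^k}$. For $d\in A$ define $\sigma_d:=\frac{1}{|G|^k}\sum_{x\in A^k}\sum_{w,v\in A}\chi_w(d)\overline{\chi_v(d)}\sqrt{\eta^x_w\eta^x_v}\,|x,S^x_w\rangle\langle x,S^x_v|$ (this is the Fourier-transformed $k$-copy hidden subgroup state for $\langle(d,1)\rangle$). *)

theory Defs
  imports Complex_Main "HOL-Library.Cardinality" "HOL-Computational_Algebra.Primes"
begin

text \<open>An operator on the space C^I is a function i => j => complex; only the
entries with i, j in I matter.\<close>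

definition op_mult :: "'i set \<Rightarrow> ('i \<Rightarrow> 'i \<Rightarrow> complex) \<Rightarrow> ('i \<Rightarrow> 'i \<Rightarrow> complex) \<Rightarrow> ('i \<Rightarrow> 'i \<Rightarrow> complex)" where
  "op_mult I M N = (\<lambda>i j. \<Sum>l\<in>I. M i l * N l j)"

definition op_trace :: "'i set \<Rightarrow> ('i \<Rightarrow> 'i \<Rightarrow> complex) \<Rightarrow> complex" where
  "op_trace I M = (\<Sum>i\<in>I. M i i)"

definition ketbra :: "('i \<Rightarrow> complex) \<Rightarrow> ('i \<Rightarrow> complex) \<Rightarrow> ('i \<Rightarrow> 'i \<Rightarrow> complex)" where
  "ketbra u v = (\<lambda>i j. u i * cnj (v j))"

definition vinner :: "'i set \<Rightarrow> ('i \<Rightarrow> complex) \<Rightarrow> ('i \<Rightarrow> complex) \<Rightarrow> complex" where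
  "vinner I u v = (\<Sum>i\<in>I. cnj (u i) * v i)"

definition hermitian_op :: "'i set \<Rightarrow> ('i \<Rightarrow> 'i \<Rightarrow> complex) \<Rightarrow> bool" where
  "hermitian_op I M \<longleftrightarrow> (\<forall>i\<in>I. \<forall>j\<in>I. M j i = cnj (M i j))"

definition psd_op :: "'i set \<Rightarrow> ('i \<Rightarrow> 'i \<Rightarrow> complex) \<Rightarrow> bool" where
  "psd_op I M \<longleftrightarrow> (\<forall>v. Im (\<Sum>i\<in>I. \<Sum>j\<in>I. cnj (v i) * M i j * v j) = 0
                       \<and> Re (\<Sum>i\<in>I. \<Sum>j\<in>I. cnj (v i) * M i j * v j) \<ge> 0)"

definition density_op :: "'i set \<Rightarrow> ('i \<Rightarrow> 'i \<Rightarrow> complex) \<Rightarrow> bool" where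
  "density_op I M \<longleftrightarrow> hermitian_op I M \<and> psd_op I M \<and> op_trace I M = 1"

text \<open>R is the inverse square root of M on the support of M: M has a spectral
decomposition M = sum_a lambda_a |e_a><e_a| with an orthonormal family (e_a) and
strictly positive eigenvalues lambda_a (the nonzero part of the spectrum), and
R = sum_a lambda_a^(-1/2) |e_a><e_a|.\<close>
definition is_pinv_sqrt :: "'i set \<Rightarrow> ('i \<Rightarrow> 'i \<Rightarrow> complex) \<Rightarrow> ('i \<Rightarrow> 'i \<Rightarrow> complex) \<Rightarrow> bool" where
  "is_pinv_sqrt I M R \<longleftrightarrow>
     (\<exists>(n::nat) (e::nat \<Rightarrow> 'i \<Rightarrow> complex) (lam::nat \<Rightarrow> real).
        (\<forall>a<n. \<forall>b<n. vinner I (e a) (e b) = (if a = b then 1 else 0)) \<and>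
        (\<forall>a<n. lam a > 0) \<and>
        (\<forall>i\<in>I. \<forall>j\<in>I. M i j = (\<Sum>a<n. complex_of_real (lam a) * ketbra (e a) (e a) i j)) \<and>
        (\<forall>i\<in>I. \<forall>j\<in>I. R i j = (\<Sum>a<n. complex_of_real (1 / sqrt (lam a)) * ketbra (e a) (e a) i j)))"

definition Ak :: "nat \<Rightarrow> 'a list set" where
  "Ak k = {x. length x = k}"

definition Zpk :: "nat \<Rightarrow> nat \<Rightarrow> nat list set" where
  "Zpk p k = {b. length b = k \<and> (\<forall>c\<in>set b. c < p)}"

definition index_set :: "nat \<Rightarrow> nat \<Rightarrow> ('a list \<times> nat list) set" where
  "index_set p k = Ak k \<times> Zpk p k"

definition Phi :: "('a::ab_group_add \<Rightarrow> 'a) \<Rightarrow> nat \<Rightarrow> 'a \<Rightarrow> 'a" where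
  "Phi phi b d = (\<Sum>i<b. (phi ^^ i) d)"

definition hatPhi_vec :: "(nat \<Rightarrow> 'a::ab_group_add \<Rightarrow> 'a) \<Rightarrow> nat \<Rightarrow> 'a list \<Rightarrow> nat list \<Rightarrow> 'a" where
  "hatPhi_vec hPhi k x b = (\<Sum>j<k. hPhi (b ! j) (x ! j))"

definition Sset :: "(nat \<Rightarrow> 'a::ab_group_add \<Rightarrow> 'a) \<Rightarrow> nat \<Rightarrow> nat \<Rightarrow> 'a list \<Rightarrow> 'a \<Rightarrow> nat list set" where
  "Sset hPhi p k x w = {b \<in> Zpk p k. hatPhi_vec hPhi k x b = w}"

definition eta :: "(nat \<Rightarrow> 'a::ab_group_add \<Rightarrow> 'a) \<Rightarrow> nat \<Rightarrow> nat \<Rightarrow> 'a list \<Rightarrow> 'a \<Rightarrow> nat" where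
  "eta hPhi p k x w = card (Sset hPhi p k x w)"

text \<open>The vector |x, S^x_w> (which is 0 if S^x_w is empty).\<close>
definition ketS :: "(nat \<Rightarrow> 'a::ab_group_add \<Rightarrow> 'a) \<Rightarrow> nat \<Rightarrow> nat \<Rightarrow> 'a list \<Rightarrow> 'a
                     \<Rightarrow> ('a list \<times> nat list) \<Rightarrow> complex" where
  "ketS hPhi p k x w = (\<lambda>(y, b). if y = x \<and> b \<in> Sset hPhi p k x w
       then complex_of_real (1 / sqrt (real (eta hPhi p k x w))) else 0)"

definition sigma :: "('a::{ab_group_add,finite} \<Rightarrow> 'a \<Rightarrow> complex) \<Rightarrow> (nat \<Rightarrow> 'a \<Rightarrow> 'a) \<Rightarrow> nat \<Rightarrow> nat \<Rightarrow> 'a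
     \<Rightarrow> ('a list \<times> nat list) \<Rightarrow> ('a list \<times> nat list) \<Rightarrow> complex" where
  "sigma chi hPhi p k d = (\<lambda>i j. (1 / of_nat ((p * CARD('a)) ^ k)) *
     (\<Sum>x\<in>Ak k. \<Sum>w\<in>UNIV. \<Sum>v\<in>UNIV. chi w d * cnj (chi v d) *
        complex_of_real (sqrt (real (eta hPhi p k x w * eta hPhi p k x v))) *
        ketbra (ketS hPhi p k x w) (ketS hPhi p k x v) i j))"

definition SigmaOp :: "('a::{ab_group_add,finite} \<Rightarrow> 'a \<Rightarrow> complex) \<Rightarrow> (nat \<Rightarrow> 'a \<Rightarrow> 'a) \<Rightarrow> nat \<Rightarrow> nat
     \<Rightarrow> ('a list \<times> nat list) \<Rightarrow> ('a list \<times> nat list) \<Rightarrow> complex" where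
  "SigmaOp chi hPhi p k = (\<lambda>i j. \<Sum>d\<in>UNIV. sigma chi hPhi p k d i j)"

definition Eop :: "('a::{ab_group_add,finite} \<Rightarrow> 'a \<Rightarrow> complex) \<Rightarrow> (nat \<Rightarrow> 'a \<Rightarrow> 'a) \<Rightarrow> nat \<Rightarrow> nat \<Rightarrow> 'a
     \<Rightarrow> ('a list \<times> nat list) \<Rightarrow> ('a list \<times> nat list) \<Rightarrow> complex" where
  "Eop chi hPhi p k j = (\<lambda>i i'. (1 / of_nat CARD('a)) *
     (\<Sum>x\<in>Ak k. \<Sum>w\<in>UNIV. \<Sum>v\<in>UNIV. chi w j * cnj (chi v j) *
        ketbra (ketS hPhi p k x w) (ketS hPhi p k x v) i i'))"

end

(* Write psi^d_x = sum_w chi_w(d) sqrt(eta^x_w) |x,S^x_w> and phi^d_x = sum_w chi_w(d) |x,S^x_w>.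
   Then sigma_d = |G|^-k sum_x |psi^d_x><psi^d_x| and E_d = |A|^-1 sum_x |phi^d_x><phi^d_x|.
   The vectors |x,S^x_w> with eta^x_w > 0 are orthonormal, and orthogonality of characters kills
   the off-diagonal terms of sum_d sigma_d, so Sigma is diagonal in this family with eigenvalues
   |A| eta^x_w / |G|^k. Hence Sigma^(-1/2) maps psi^d_x to sqrt(|G|^k / |A|) phi^d_x, which turns
   Sigma^(-1/2) sigma_d Sigma^(-1/2) into E_d. The traces follow from <psi^d_x, psi^d_x> = p^k and
   <phi^d_x, psi^d_y> = [x = y] sum_w sqrt(eta^x_w). *)

theory Submission
  imports Defs
begin

section \<open>Operators that are weighted sums of projections\<close>

definition op_apply :: "'i set \<Rightarrow> ('i \<Rightarrow> 'i \<Rightarrow> complex) \<Rightarrow> ('i \<Rightarrow> complex) \<Rightarrow> 'i \<Rightarrow> complex" where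
  "op_apply I M u = (\<lambda>i. \<Sum>l\<in>I. M i l * u l)"

definition ketbra_sum :: "'t set \<Rightarrow> ('t \<Rightarrow> real) \<Rightarrow> ('t \<Rightarrow> 'i \<Rightarrow> complex) \<Rightarrow> 'i \<Rightarrow> 'i \<Rightarrow> complex" where
  "ketbra_sum T f u = (\<lambda>i j. \<Sum>t\<in>T. complex_of_real (f t) * ketbra (u t) (u t) i j)"

definition orthonormal :: "'i set \<Rightarrow> 't set \<Rightarrow> ('t \<Rightarrow> 'i \<Rightarrow> complex) \<Rightarrow> bool" where
  "orthonormal I T u \<longleftrightarrow> (\<forall>s\<in>T. \<forall>t\<in>T. vinner I (u s) (u t) = (if s = t then 1 else 0))"

lemma is_pinv_sqrt_iff:
  "is_pinv_sqrt I M R \<longleftrightarrow>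
     (\<exists>(n::nat) e lam. orthonormal I {..<n} e \<and> (\<forall>a<n. lam a > 0) \<and>
        (\<forall>i\<in>I. \<forall>j\<in>I. M i j = ketbra_sum {..<n} lam e i j) \<and>
        (\<forall>i\<in>I. \<forall>j\<in>I. R i j = ketbra_sum {..<n} (\<lambda>a. 1 / sqrt (lam a)) e i j))"
  unfolding is_pinv_sqrt_def orthonormal_def ketbra_sum_def Ball_def lessThan_iff ..

lemma vinner_cong:
  "(\<And>i. i \<in> I \<Longrightarrow> v i = v' i) \<Longrightarrow> vinner I u v = vinner I u v'"
  unfolding vinner_def by simp

lemma vinner_sum_right:
  "vinner I u (\<lambda>i. \<Sum>t\<in>T. c t * v t i) = (\<Sum>t\<in>T. c t * vinner I u (v t))"
  unfolding vinner_def by (simp add: sum_distrib_left algebra_simps sum.swap[of _ I])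

lemma vinner_sum_left:
  "vinner I (\<lambda>i. \<Sum>t\<in>T. c t * v t i) u = (\<Sum>t\<in>T. cnj (c t) * vinner I (v t) u)"
  unfolding vinner_def by (simp add: sum_distrib_left sum_distrib_right algebra_simps sum.swap[of _ I])

lemma cnj_vinner: "cnj (vinner I u v) = vinner I v u"
  unfolding vinner_def by (simp add: mult.commute)

lemma vinner_orthonormal_sum:
  assumes "orthonormal I T u" "finite T" "s \<in> T"
  shows "vinner I (u s) (\<lambda>i. \<Sum>t\<in>T. c t * u t i) = c s"
proof -
  have "vinner I (u s) (\<lambda>i. \<Sum>t\<in>T. c t * u t i) = (\<Sum>t\<in>T. if t = s then c t else 0)"
    using assms unfolding vinner_sum_right orthonormal_def by (intro sum.cong) auto
  then show ?thesis
    using assms by simp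
qed

lemma op_apply_cong:
  "(\<And>j. j \<in> I \<Longrightarrow> M i j = M' i j) \<Longrightarrow> op_apply I M u i = op_apply I M' u i"
  unfolding op_apply_def by simp

lemma op_apply_sum:
  "op_apply I M (\<lambda>i. \<Sum>t\<in>T. c t * v t i) i = (\<Sum>t\<in>T. c t * op_apply I M (v t) i)"
  unfolding op_apply_def by (simp add: sum_distrib_left algebra_simps sum.swap[of _ I])

lemma op_apply_ketbra_sum:
  "op_apply I (ketbra_sum T f u) g i = (\<Sum>t\<in>T. complex_of_real (f t) * vinner I (u t) g * u t i)"
  unfolding op_apply_def ketbra_sum_def ketbra_def vinner_def
  by (simp add: sum_distrib_left sum_distrib_right algebra_simps sum.swap[of _ I])

lemma op_apply_ketbra_sum_orthonormal:
  assumes "orthonormal I T u" "finite T" "s \<in> T"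
  shows "op_apply I (ketbra_sum T f u) (u s) i = complex_of_real (f s) * u s i"
proof -
  have "op_apply I (ketbra_sum T f u) (u s) i = (\<Sum>t\<in>T. if t = s then complex_of_real (f t) * u t i else 0)"
    using assms unfolding op_apply_ketbra_sum orthonormal_def by (intro sum.cong) auto
  then show ?thesis
    using assms by simp
qed

lemma ketbra_sum_cong:
  assumes "\<And>t. t \<in> T \<Longrightarrow> u t i = v t i \<and> u t j = v t j"
  shows "ketbra_sum T f u i j = ketbra_sum T f v i j"
  using assms unfolding ketbra_sum_def ketbra_def by (simp cong: sum.cong)

lemma ketbra_sum_scale:
  "ketbra_sum T f (\<lambda>t i. complex_of_real c * u t i) = ketbra_sum T (\<lambda>t. c\<^sup>2 * f t) u"
  unfolding ketbra_sum_def ketbra_def by (simp add: power2_eq_square algebra_simps)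

lemma hermitian_op_ketbra_sum: "hermitian_op I (ketbra_sum T f u)"
  unfolding hermitian_op_def ketbra_sum_def ketbra_def by (simp add: mult.commute)

lemma psd_op_ketbra_sum:
  assumes "\<And>t. t \<in> T \<Longrightarrow> f t \<ge> 0"
  shows "psd_op I (ketbra_sum T f u)"
  unfolding psd_op_def
proof
  fix v
  let ?c = "\<lambda>t i j. complex_of_real (f t) * ((cnj (v i) * u t i) * (cnj (u t j) * v j))"
  have "(\<Sum>i\<in>I. \<Sum>j\<in>I. cnj (v i) * ketbra_sum T f u i j * v j) = (\<Sum>i\<in>I. \<Sum>j\<in>I. \<Sum>t\<in>T. ?c t i j)"
    unfolding ketbra_sum_def ketbra_def
    by (simp add: sum_distrib_left sum_distrib_right mult.commute mult.left_commute)
  also have "\<dots> = (\<Sum>t\<in>T. \<Sum>i\<in>I. \<Sum>j\<in>I. ?c t i j)"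
    by (simp only: sum.swap[where A = I and B = T])
  also have "\<dots> = (\<Sum>t\<in>T. complex_of_real (f t) * (vinner I v (u t) * vinner I (u t) v))"
    unfolding vinner_def sum_product by (simp add: sum_distrib_left)
  also have "\<dots> = complex_of_real (\<Sum>t\<in>T. f t * (cmod (vinner I (u t) v))\<^sup>2)"
  proof -
    have "vinner I v (u t) = cnj (vinner I (u t) v)" for t
      by (rule cnj_vinner[symmetric])
    then show ?thesis
      by (simp only: of_real_sum of_real_mult complex_norm_square mult.commute)
  qed
  finally show "Im (\<Sum>i\<in>I. \<Sum>j\<in>I. cnj (v i) * ketbra_sum T f u i j * v j) = 0 \<and>
      0 \<le> Re (\<Sum>i\<in>I. \<Sum>j\<in>I. cnj (v i) * ketbra_sum T f u i j * v j)"
    using assms by (simp add: sum_nonneg)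
qed

lemma op_trace_ketbra_sum:
  "op_trace I (ketbra_sum T f u) = (\<Sum>t\<in>T. complex_of_real (f t) * vinner I (u t) (u t))"
  unfolding op_trace_def ketbra_sum_def ketbra_def vinner_def
  by (subst sum.swap) (simp add: sum_distrib_left mult.commute)

lemma op_trace_op_mult_ketbra_sum:
  "op_trace I (op_mult I (ketbra_sum S f u) (ketbra_sum T g v))
     = (\<Sum>s\<in>S. \<Sum>t\<in>T. complex_of_real (f s * g t) * vinner I (u s) (v t) * vinner I (v t) (u s))"
proof -
  let ?a = "\<lambda>s i l. complex_of_real (f s) * ketbra (u s) (u s) i l"
  let ?b = "\<lambda>t l i. complex_of_real (g t) * ketbra (v t) (v t) l i"
  have "op_trace I (op_mult I (ketbra_sum S f u) (ketbra_sum T g v))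
      = (\<Sum>i\<in>I. \<Sum>l\<in>I. \<Sum>s\<in>S. \<Sum>t\<in>T. ?a s i l * ?b t l i)"
    unfolding op_trace_def op_mult_def ketbra_sum_def by (simp only: sum_product)
  also have "\<dots> = (\<Sum>s\<in>S. \<Sum>t\<in>T. \<Sum>i\<in>I. \<Sum>l\<in>I. ?a s i l * ?b t l i)"
    by (simp only: sum.swap[where A = I and B = S] sum.swap[where A = I and B = T])
  also have "\<dots> = (\<Sum>s\<in>S. \<Sum>t\<in>T. complex_of_real (f s * g t) * vinner I (u s) (v t) * vinner I (v t) (u s))"
  proof (intro sum.cong refl)
    fix s t
    have "(\<Sum>i\<in>I. \<Sum>l\<in>I. ?a s i l * ?b t l i)
        = complex_of_real (f s * g t) * (\<Sum>l\<in>I. \<Sum>i\<in>I. (cnj (u s l) * v t l) * (cnj (v t i) * u s i))"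
      unfolding ketbra_def by (subst sum.swap) (simp add: sum_distrib_left algebra_simps)
    then show "(\<Sum>i\<in>I. \<Sum>l\<in>I. ?a s i l * ?b t l i)
        = complex_of_real (f s * g t) * vinner I (u s) (v t) * vinner I (v t) (u s)"
      unfolding vinner_def by (simp add: sum_product mult.assoc)
  qed
  finally show ?thesis .
qed

lemma op_mult_sandwich_ketbra_sum:
  assumes "hermitian_op I R" "i \<in> I" "i' \<in> I"
  shows "op_mult I (op_mult I R (ketbra_sum T f u)) R i i'
       = ketbra_sum T f (\<lambda>t. op_apply I R (u t)) i i'"
proof -
  let ?c = "\<lambda>t l m. complex_of_real (f t) * (R i l * u t l) * (cnj (R i' m) * cnj (u t m))"
  have R_adj: "R m i' = cnj (R i' m)" if "m \<in> I" for m
    using assms that unfolding hermitian_op_def by blast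
  have "op_mult I (op_mult I R (ketbra_sum T f u)) R i i' = (\<Sum>m\<in>I. \<Sum>l\<in>I. \<Sum>t\<in>T. ?c t l m)"
    unfolding op_mult_def ketbra_sum_def ketbra_def
    by (intro sum.cong refl) (simp add: R_adj sum_distrib_left sum_distrib_right algebra_simps)
  also have "\<dots> = (\<Sum>t\<in>T. \<Sum>l\<in>I. \<Sum>m\<in>I. ?c t l m)"
    by (subst sum.swap) (simp only: sum.swap[where A = I and B = T])
  also have "\<dots> = (\<Sum>t\<in>T. complex_of_real (f t) *
      ((\<Sum>l\<in>I. R i l * u t l) * (\<Sum>m\<in>I. cnj (R i' m) * cnj (u t m))))"
    unfolding sum_product by (simp add: sum_distrib_left mult.assoc)
  also have "\<dots> = ketbra_sum T f (\<lambda>t. op_apply I R (u t)) i i'"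
    unfolding ketbra_sum_def ketbra_def op_apply_def by (simp only: cnj_sum complex_cnj_mult)
  finally show ?thesis .
qed

lemma ketbra_of_sums:
  "ketbra (\<lambda>i. \<Sum>w\<in>W. a w * u w i) (\<lambda>j. \<Sum>v\<in>V. b v * u' v j) i j
     = (\<Sum>w\<in>W. \<Sum>v\<in>V. a w * cnj (b v) * ketbra (u w) (u' v) i j)"
  unfolding ketbra_def by (simp add: sum_product algebra_simps)

lemma is_pinv_sqrt_hermitian:
  assumes "is_pinv_sqrt I M R"
  shows "hermitian_op I R"
proof -
  obtain n :: nat and e lam where "\<forall>i\<in>I. \<forall>j\<in>I. R i j = ketbra_sum {..<n} (\<lambda>a. 1 / sqrt (lam a)) e i j"
    using assms unfolding is_pinv_sqrt_iff by blast
  then show ?thesis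
    using hermitian_op_ketbra_sum unfolding hermitian_op_def by metis
qed

lemma op_apply_ketbra_sum_on:
  assumes "\<forall>i\<in>I. \<forall>j\<in>I. M i j = ketbra_sum T f u i j" "i \<in> I"
  shows "op_apply I M g i = (\<Sum>t\<in>T. complex_of_real (f t) * vinner I (u t) g * u t i)"
proof -
  have "op_apply I M g i = op_apply I (ketbra_sum T f u) g i"
    using assms by (intro op_apply_cong) auto
  then show ?thesis
    by (simp add: op_apply_ketbra_sum)
qed

lemma eigenvector_coeff_orthonormal:
  assumes orth: "orthonormal I T e" "finite T"
    and M: "\<forall>i\<in>I. \<forall>j\<in>I. M i j = ketbra_sum T lam e i j"
    and eigen: "\<And>i. i \<in> I \<Longrightarrow> op_apply I M g i = complex_of_real \<mu> * g i"
    and "s \<in> T"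
  shows "vinner I (e s) g = 0 \<or> lam s = \<mu>"
proof -
  let ?c = "\<lambda>t. vinner I (e t) g"
  have "vinner I (e s) (op_apply I M g)
      = vinner I (e s) (\<lambda>j. \<Sum>t\<in>T. (complex_of_real (lam t) * ?c t) * e t j)"
    using op_apply_ketbra_sum_on[OF M] by (intro vinner_cong) (simp add: mult.assoc)
  also have "\<dots> = complex_of_real (lam s) * ?c s"
    using orth \<open>s \<in> T\<close> by (rule vinner_orthonormal_sum)
  finally have "vinner I (e s) (op_apply I M g) = complex_of_real (lam s) * ?c s" .
  moreover have "vinner I (e s) (op_apply I M g) = vinner I (e s) (\<lambda>j. complex_of_real \<mu> * g j)"
    using eigen by (rule vinner_cong)
  ultimately have "complex_of_real (lam s) * ?c s = complex_of_real \<mu> * ?c s"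
    unfolding vinner_def by (simp add: sum_distrib_left mult.left_commute)
  then show ?thesis
    by simp
qed

text \<open>Expanding g in the eigenbasis of M, only eigenvectors with eigenvalue \<open>\<mu>\<close> contribute.\<close>

lemma is_pinv_sqrt_apply_eigenvector:
  assumes R: "is_pinv_sqrt I M R"
    and eigen: "\<And>i. i \<in> I \<Longrightarrow> op_apply I M g i = complex_of_real \<mu> * g i"
    and "\<mu> > 0" "i \<in> I"
  shows "op_apply I R g i = complex_of_real (1 / sqrt \<mu>) * g i"
proof -
  obtain n :: nat and e lam where orth: "orthonormal I {..<n} e"
    and M: "\<forall>i\<in>I. \<forall>j\<in>I. M i j = ketbra_sum {..<n} lam e i j"
    and R: "\<forall>i\<in>I. \<forall>j\<in>I. R i j = ketbra_sum {..<n} (\<lambda>a. 1 / sqrt (lam a)) e i j"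
    using R unfolding is_pinv_sqrt_iff by blast
  define c where "c a = vinner I (e a) g" for a
  have coeff: "c a = 0 \<or> lam a = \<mu>" if "a < n" for a
    unfolding c_def using eigenvector_coeff_orthonormal[OF orth _ M eigen] that by simp
  have "complex_of_real \<mu> * g i = (\<Sum>a<n. (complex_of_real (lam a) * c a) * e a i)"
    using eigen[OF \<open>i \<in> I\<close>] op_apply_ketbra_sum_on[OF M \<open>i \<in> I\<close>] by (simp add: c_def mult.assoc)
  also have "\<dots> = (\<Sum>a<n. (complex_of_real \<mu> * c a) * e a i)"
    by (intro sum.cong refl) (use coeff in fastforce)
  also have "\<dots> = complex_of_real \<mu> * (\<Sum>a<n. c a * e a i)"
    by (simp add: sum_distrib_left mult.assoc)
  finally have g: "g i = (\<Sum>a<n. c a * e a i)"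
    using \<open>\<mu> > 0\<close> by simp
  have "op_apply I R g i = (\<Sum>a<n. (complex_of_real (1 / sqrt (lam a)) * c a) * e a i)"
    using op_apply_ketbra_sum_on[OF R \<open>i \<in> I\<close>] by (simp add: c_def mult.assoc)
  also have "\<dots> = (\<Sum>a<n. (complex_of_real (1 / sqrt \<mu>) * c a) * e a i)"
    by (intro sum.cong refl) (use coeff in fastforce)
  finally show ?thesis
    unfolding g by (simp add: sum_distrib_left mult.assoc)
qed

lemma is_pinv_sqrt_exists:
  assumes "finite T" "orthonormal I T u" "\<And>t. t \<in> T \<Longrightarrow> lam t > 0"
    and "\<forall>i\<in>I. \<forall>j\<in>I. M i j = ketbra_sum T lam u i j"
  shows "\<exists>R. is_pinv_sqrt I M R"
proof -
  obtain h where h: "bij_betw h {..<card T} T"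
    using ex_bij_betw_nat_finite[OF \<open>finite T\<close>] by (auto simp: atLeast0LessThan)
  have reindex: "ketbra_sum {..<card T} (f \<circ> h) (u \<circ> h) = ketbra_sum T f u" for f :: "_ \<Rightarrow> real"
    unfolding ketbra_sum_def comp_def by (intro ext sum.reindex_bij_betw[OF h])
  have h_into: "h a \<in> T" if "a < card T" for a
    using h that by (auto dest: bij_betwE)
  have h_inj: "h a = h b \<longleftrightarrow> a = b" if "a < card T" "b < card T" for a b
    using h that by (auto simp: bij_betw_def inj_on_eq_iff)
  have "orthonormal I {..<card T} (u \<circ> h)"
    using assms(2) h_into h_inj unfolding orthonormal_def by auto
  moreover have "\<forall>a<card T. (lam \<circ> h) a > 0"
    using assms(3) h_into by simp
  ultimately show ?thesis
    unfolding is_pinv_sqrt_iff using assms(4)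
    by (intro exI[where x = "\<lambda>i j. ketbra_sum T (\<lambda>t. 1 / sqrt (lam t)) u i j"]
        exI[where x = "card T"] exI[where x = "u \<circ> h"] exI[where x = "lam \<circ> h"])
      (simp add: reindex[symmetric] comp_def)
qed

section \<open>Nondegenerate bicharacters\<close>

locale nondegenerate_bicharacter =
  fixes chi :: "'a::{ab_group_add,finite} \<Rightarrow> 'a \<Rightarrow> complex"
  assumes nonzero: "chi x y \<noteq> 0"
    and add_right: "chi x (y + z) = chi x y * chi x z"
    and add_left: "chi (x + x') y = chi x y * chi x' y"
    and inj: "inj chi"
begin

lemma zero_left [simp]: "chi 0 y = 1"
  using add_left[of 0 0 y] nonzero[of 0 y] by simp

lemma zero_right [simp]: "chi x 0 = 1"
  using add_right[of x 0 0] nonzero[of x 0] by simp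

lemma power_eq: "chi x y ^ m = chi x (\<Sum>i<m. y)"
  by (induction m) (simp_all add: add_right mult.commute)

lemma norm_eq_1: "norm (chi x y) = 1"
proof -
  let ?z = "chi x y"
  have "range (\<lambda>m::nat. ?z ^ m) \<subseteq> range (chi x)"
    by (auto simp: power_eq)
  then have "finite (range (\<lambda>m::nat. ?z ^ m))"
    by (rule finite_subset) simp
  then have "\<not> inj (\<lambda>m::nat. ?z ^ m)"
    using finite_imageD infinite_UNIV_nat by blast
  then obtain a b :: nat where "a \<noteq> b" "?z ^ a = ?z ^ b"
    unfolding inj_def by blast
  then obtain a b :: nat where "a < b" and eq: "?z ^ a = ?z ^ b"
    by (metis linorder_neqE_nat)
  have "?z ^ a * ?z ^ (b - a) = ?z ^ b"
    using \<open>a < b\<close> by (simp flip: power_add)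
  then have "?z ^ (b - a) = 1"
    using eq nonzero by simp
  then have "norm ?z ^ (b - a) = 1"
    by (metis norm_one norm_power)
  then show ?thesis
    using \<open>a < b\<close> power_eq_iff_eq_base[of "b - a" "norm ?z" 1] by simp
qed

lemma mult_cnj [simp]: "chi x y * cnj (chi x y) = 1"
  using complex_norm_square[of "chi x y"] norm_eq_1 by simp

lemma cnj_mult [simp]: "cnj (chi x y) * chi x y = 1"
  using mult_cnj[of x y] by (simp add: mult.commute)

lemma cnj_mult_cancel: "cnj (chi x y) * (chi x y * z) = z"
  by (simp add: mult.assoc[symmetric])

lemma cnj_mult_mult_cancel: "cnj (chi x y * z) * (chi x y * z') = cnj z * z'"
proof -
  have "cnj (chi x y * z) * (chi x y * z') = (cnj (chi x y) * chi x y) * (cnj z * z')"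
    by (simp add: mult_ac)
  then show ?thesis
    by simp
qed

lemma cnj_eq: "cnj (chi x y) = chi (- x) y"
proof -
  have "cnj (chi x y) * chi x y = chi (- x) y * chi x y"
    using add_left[of "- x" x y] by simp
  then show ?thesis
    using nonzero[of x y] by (metis mult_cancel_right)
qed

lemma orthogonality:
  "(\<Sum>d\<in>UNIV. chi w d * cnj (chi v d)) = (if w = v then of_nat CARD('a) else 0)"
proof (cases "w = v")
  case False
  have "chi (w - v) \<noteq> chi 0"
    using False inj by (auto dest: injD)
  then obtain e where e: "chi (w - v) e \<noteq> 1"
    by (auto simp: fun_eq_iff)
  have "(\<Sum>d\<in>UNIV. chi (w - v) d) = (\<Sum>d\<in>UNIV. chi (w - v) (d + e))"
    by (rule sum.reindex_bij_witness[where i = "\<lambda>d. d + e" and j = "\<lambda>d. d - e"]) auto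
  also have "\<dots> = chi (w - v) e * (\<Sum>d\<in>UNIV. chi (w - v) d)"
    by (simp add: add_right sum_distrib_left mult.commute)
  finally have "(\<Sum>d\<in>UNIV. chi (w - v) d) = 0"
    using e by simp
  moreover have "chi w d * cnj (chi v d) = chi (w - v) d" for d
    by (simp add: cnj_eq add_left[symmetric])
  ultimately show ?thesis
    using False by simp
qed simp

lemma sum_orthogonality:
  "(\<Sum>d\<in>UNIV. \<Sum>w\<in>UNIV. \<Sum>v\<in>UNIV. chi w d * cnj (chi v d) * F w v)
     = of_nat CARD('a) * (\<Sum>w\<in>UNIV. F w w)"
proof -
  have "(\<Sum>d\<in>UNIV. \<Sum>w\<in>UNIV. \<Sum>v\<in>UNIV. chi w d * cnj (chi v d) * F w v)
      = (\<Sum>w\<in>UNIV. \<Sum>d\<in>UNIV. \<Sum>v\<in>UNIV. chi w d * cnj (chi v d) * F w v)"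
    by (rule sum.swap)
  also have "\<dots> = (\<Sum>w\<in>UNIV. \<Sum>v\<in>UNIV. (\<Sum>d\<in>UNIV. chi w d * cnj (chi v d)) * F w v)"
    by (rule sum.cong[OF refl], subst sum.swap) (simp add: sum_distrib_right)
  also have "\<dots> = of_nat CARD('a) * (\<Sum>w\<in>UNIV. F w w)"
    by (simp add: orthogonality if_distrib[of "\<lambda>z. z * _"] sum_distrib_left cong: if_cong)
  finally show ?thesis .
qed

end

section \<open>The orthonormal family |x, S^x_w>\<close>

lemma finite_Zpk: "finite (Zpk p k)"
  unfolding Zpk_def by (rule finite_subset[OF _ finite_lists_length_eq[of "{..<p}" k]]) auto

lemma card_Zpk: "card (Zpk p k) = p ^ k"
proof -
  have "Zpk p k = {xs. set xs \<subseteq> {..<p} \<and> length xs = k}"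
    unfolding Zpk_def by auto
  then show ?thesis
    by (simp add: card_lists_length_eq)
qed

lemma finite_Ak: "finite (Ak k :: 'a::finite list set)"
  unfolding Ak_def using finite_lists_length_eq[of "UNIV :: 'a set" k] by simp

lemma card_Ak: "card (Ak k :: 'a::finite list set) = CARD('a) ^ k"
  unfolding Ak_def using card_lists_length_eq[of "UNIV :: 'a set" k] by simp

lemma finite_index_set: "finite (index_set p k :: ('a::finite list \<times> nat list) set)"
  unfolding index_set_def using finite_Ak finite_Zpk by blast

lemma ketS_eq_0: "eta hPhi p k x w = 0 \<Longrightarrow> ketS hPhi p k x w i = 0"
  unfolding ketS_def by (simp add: case_prod_beta)

lemma sum_eta: "(\<Sum>w\<in>UNIV. eta hPhi p k x (w :: 'a::{finite,ab_group_add})) = p ^ k"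
proof -
  have "(\<Sum>w\<in>UNIV. eta hPhi p k x w) = (\<Sum>w\<in>UNIV. \<Sum>b\<in>{b \<in> Zpk p k. hatPhi_vec hPhi k x b = w}. 1)"
    unfolding eta_def Sset_def by simp
  also have "\<dots> = card (Zpk p k)"
    by (subst sum.group) (simp_all add: finite_Zpk)
  finally show ?thesis
    by (simp add: card_Zpk)
qed

lemma cnj_ketS_mult_ketS:
  "cnj (ketS hPhi p k x w i) * ketS hPhi p k y v i
     = (if x = y \<and> w = v \<and> i \<in> {x} \<times> Sset hPhi p k x w
        then complex_of_real (1 / real (eta hPhi p k x w)) else 0)"
proof (cases i)
  case (Pair z b)
  show ?thesis
  proof (cases "z = x \<and> z = y \<and> b \<in> Sset hPhi p k x w \<and> b \<in> Sset hPhi p k y v")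
    case True
    then have "y = x" "v = w"
      unfolding Sset_def by auto
    moreover have "1 / sqrt e * (1 / sqrt e) = 1 / e" if "e \<ge> 0" for e :: real
      using that by (simp add: real_sqrt_mult_self)
    ultimately show ?thesis
      using True Pair by (simp add: ketS_def flip: of_real_mult)
  next
    case False
    then have "ketS hPhi p k x w i = 0 \<or> ketS hPhi p k y v i = 0"
      using Pair by (auto simp: ketS_def)
    moreover have "\<not> (x = y \<and> w = v \<and> i \<in> {x} \<times> Sset hPhi p k x w)"
      using False Pair by auto
    ultimately show ?thesis
      by auto
  qed
qed

lemma vinner_ketS:
  fixes hPhi :: "nat \<Rightarrow> 'a::{finite,ab_group_add} \<Rightarrow> 'a"
  assumes "x \<in> Ak k"
  shows "vinner (index_set p k) (ketS hPhi p k x w) (ketS hPhi p k y v)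
     = (if x = y \<and> w = v \<and> 0 < eta hPhi p k x w then 1 else 0)"
proof (cases "x = y \<and> w = v")
  case True
  let ?X = "{x} \<times> Sset hPhi p k x w" and ?c = "complex_of_real (1 / real (eta hPhi p k x w))"
  have "vinner (index_set p k) (ketS hPhi p k x w) (ketS hPhi p k y v)
      = (\<Sum>i\<in>index_set p k. if i \<in> ?X then ?c else 0)"
    unfolding vinner_def cnj_ketS_mult_ketS using True by simp
  also have "\<dots> = (\<Sum>i\<in>index_set p k \<inter> ?X. ?c)"
    by (rule sum.inter_restrict[OF finite_index_set, symmetric])
  also have "index_set p k \<inter> ?X = ?X"
    using assms unfolding index_set_def Sset_def by auto
  finally show ?thesis
    using True by (simp add: card_cartesian_product eta_def)
next
  case False
  have "vinner (index_set p k) (ketS hPhi p k x w) (ketS hPhi p k y v) = 0"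
    unfolding vinner_def cnj_ketS_mult_ketS using False by (intro sum.neutral) auto
  then show ?thesis
    using False by auto
qed

definition ket_support :: "(nat \<Rightarrow> 'a::ab_group_add \<Rightarrow> 'a) \<Rightarrow> nat \<Rightarrow> nat \<Rightarrow> ('a list \<times> 'a) set" where
  "ket_support hPhi p k = {(x, w). x \<in> Ak k \<and> 0 < eta hPhi p k x w}"

lemma finite_ket_support: "finite (ket_support hPhi p k :: ('a::{finite,ab_group_add} list \<times> 'a) set)"
  unfolding ket_support_def
  by (rule finite_subset[of _ "Ak k \<times> UNIV"]) (auto simp: finite_Ak)

lemma orthonormal_ketS:
  fixes hPhi :: "nat \<Rightarrow> 'a::{finite,ab_group_add} \<Rightarrow> 'a"
  shows "orthonormal (index_set p k) (ket_support hPhi p k) (\<lambda>(x, w). ketS hPhi p k x w)"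
  unfolding orthonormal_def ket_support_def by (auto simp: vinner_ketS)

lemma vinner_ketS_combination:
  fixes hPhi :: "nat \<Rightarrow> 'a::{finite,ab_group_add} \<Rightarrow> 'a"
  assumes "x \<in> Ak k"
  shows "vinner (index_set p k) (\<lambda>i. \<Sum>w\<in>UNIV. a w * ketS hPhi p k x w i)
                                (\<lambda>i. \<Sum>v\<in>UNIV. b v * ketS hPhi p k y v i)
     = (if x = y then (\<Sum>w\<in>UNIV. if 0 < eta hPhi p k x w then cnj (a w) * b w else 0) else 0)"
proof -
  have inner: "(\<Sum>v\<in>UNIV. b v * vinner (index_set p k) (ketS hPhi p k x w) (ketS hPhi p k y v))
      = (if x = y \<and> 0 < eta hPhi p k x w then b w else 0)" for w
  proof -
    have "(\<Sum>v\<in>UNIV. b v * vinner (index_set p k) (ketS hPhi p k x w) (ketS hPhi p k y v))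
        = (\<Sum>v\<in>UNIV. if v = w then (if x = y \<and> 0 < eta hPhi p k x w then b w else 0) else 0)"
      using assms by (intro sum.cong refl) (auto simp: vinner_ketS)
    then show ?thesis
      by simp
  qed
  show ?thesis
    by (simp add: vinner_sum_left vinner_sum_right inner if_distrib[of "(*) _"] cong: if_cong)
qed

section \<open>Hidden subgroup states and the pretty good measurement\<close>

locale hidden_subgroup_states = nondegenerate_bicharacter chi
  for chi :: "'a::{ab_group_add,finite} \<Rightarrow> 'a \<Rightarrow> complex" +
  fixes hPhi :: "nat \<Rightarrow> 'a \<Rightarrow> 'a" and p k :: nat
  assumes p_pos: "0 < p"
begin

definition state_vec :: "'a \<Rightarrow> 'a list \<Rightarrow> 'a list \<times> nat list \<Rightarrow> complex" where
  "state_vec d x = (\<lambda>i. \<Sum>w\<in>UNIV.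
     chi w d * complex_of_real (sqrt (real (eta hPhi p k x w))) * ketS hPhi p k x w i)"

definition pgm_vec :: "'a \<Rightarrow> 'a list \<Rightarrow> 'a list \<times> nat list \<Rightarrow> complex" where
  "pgm_vec d x = (\<lambda>i. \<Sum>w\<in>UNIV. chi w d * ketS hPhi p k x w i)"

definition Sigma_eigenvalue :: "'a list \<times> 'a \<Rightarrow> real" where
  "Sigma_eigenvalue =
     (\<lambda>(x, w). real CARD('a) * real (eta hPhi p k x w) / real ((p * CARD('a)) ^ k))"

lemma sigma_eq_ketbra_sum:
  "sigma chi hPhi p k d = ketbra_sum (Ak k) (\<lambda>_. 1 / real ((p * CARD('a)) ^ k)) (state_vec d)"
proof (intro ext)
  fix i j
  have "ketbra (state_vec d x) (state_vec d x) i j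
      = (\<Sum>w\<in>UNIV. \<Sum>v\<in>UNIV. chi w d * cnj (chi v d) *
           complex_of_real (sqrt (real (eta hPhi p k x w * eta hPhi p k x v))) *
           ketbra (ketS hPhi p k x w) (ketS hPhi p k x v) i j)" for x
    unfolding state_vec_def ketbra_of_sums by (simp add: real_sqrt_mult mult_ac)
  then show "sigma chi hPhi p k d i j = ketbra_sum (Ak k) (\<lambda>_. 1 / real ((p * CARD('a)) ^ k)) (state_vec d) i j"
    unfolding sigma_def ketbra_sum_def by (simp add: sum_distrib_left)
qed

lemma Eop_eq_ketbra_sum:
  "Eop chi hPhi p k d = ketbra_sum (Ak k) (\<lambda>_. 1 / real CARD('a)) (pgm_vec d)"
proof (intro ext)
  fix i j
  have "ketbra (pgm_vec d x) (pgm_vec d x) i j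
      = (\<Sum>w\<in>UNIV. \<Sum>v\<in>UNIV. chi w d * cnj (chi v d) * ketbra (ketS hPhi p k x w) (ketS hPhi p k x v) i j)"
    for x
    unfolding pgm_vec_def ketbra_of_sums ..
  then show "Eop chi hPhi p k d i j = ketbra_sum (Ak k) (\<lambda>_. 1 / real CARD('a)) (pgm_vec d) i j"
    unfolding Eop_def ketbra_sum_def by (simp add: sum_distrib_left)
qed

lemma SigmaOp_eq:
  "SigmaOp chi hPhi p k =
     (\<lambda>i j. (of_nat CARD('a) / of_nat ((p * CARD('a)) ^ k)) *
        (\<Sum>x\<in>Ak k. \<Sum>w\<in>UNIV. of_nat (eta hPhi p k x w) *
           ketbra (ketS hPhi p k x w) (ketS hPhi p k x w) i j))"
proof (intro ext)
  fix i j
  let ?F = "\<lambda>x w v. complex_of_real (sqrt (real (eta hPhi p k x w * eta hPhi p k x v))) *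
                     ketbra (ketS hPhi p k x w) (ketS hPhi p k x v) i j"
  have "SigmaOp chi hPhi p k i j = (1 / of_nat ((p * CARD('a)) ^ k)) *
      (\<Sum>x\<in>Ak k. \<Sum>d\<in>UNIV. \<Sum>w\<in>UNIV. \<Sum>v\<in>UNIV. chi w d * cnj (chi v d) * ?F x w v)"
    unfolding SigmaOp_def sigma_def
    by (simp add: sum_distrib_left sum.swap[of _ UNIV "Ak k"] mult.assoc)
  also have "\<dots> = (1 / of_nat ((p * CARD('a)) ^ k)) *
      (\<Sum>x\<in>Ak k. of_nat CARD('a) * (\<Sum>w\<in>UNIV. ?F x w w))"
    by (simp only: sum_orthogonality)
  finally show "SigmaOp chi hPhi p k i j = (of_nat CARD('a) / of_nat ((p * CARD('a)) ^ k)) *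
        (\<Sum>x\<in>Ak k. \<Sum>w\<in>UNIV. of_nat (eta hPhi p k x w) *
           ketbra (ketS hPhi p k x w) (ketS hPhi p k x w) i j)"
    by (simp add: sum_distrib_left)
qed

lemma SigmaOp_eq_ketbra_sum:
  "SigmaOp chi hPhi p k = ketbra_sum (ket_support hPhi p k) Sigma_eigenvalue (\<lambda>(x, w). ketS hPhi p k x w)"
proof (intro ext)
  fix i j
  let ?g = "\<lambda>(x, w). complex_of_real (Sigma_eigenvalue (x, w)) *
                      ketbra (ketS hPhi p k x w) (ketS hPhi p k x w) i j"
  have "SigmaOp chi hPhi p k i j = (\<Sum>x\<in>Ak k. \<Sum>w\<in>UNIV. ?g (x, w))"
    unfolding SigmaOp_eq Sigma_eigenvalue_def by (simp add: sum_distrib_left mult.assoc)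
  also have "\<dots> = sum ?g (Ak k \<times> UNIV)"
    by (rule sum.cartesian_product'[symmetric])
  also have "\<dots> = sum ?g (ket_support hPhi p k)"
    by (rule sum.mono_neutral_right)
      (auto simp: finite_Ak ket_support_def Sigma_eigenvalue_def)
  finally show "SigmaOp chi hPhi p k i j = ketbra_sum (ket_support hPhi p k) Sigma_eigenvalue
      (\<lambda>(x, w). ketS hPhi p k x w) i j"
    unfolding ketbra_sum_def by (simp add: case_prod_beta)
qed

lemma Sigma_eigenvalue_pos: "(x, w) \<in> ket_support hPhi p k \<Longrightarrow> Sigma_eigenvalue (x, w) > 0"
  unfolding ket_support_def Sigma_eigenvalue_def using p_pos by simp

lemma pinv_sqrt_SigmaOp_exists: "\<exists>R. is_pinv_sqrt (index_set p k) (SigmaOp chi hPhi p k) R"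
  by (rule is_pinv_sqrt_exists[OF finite_ket_support orthonormal_ketS])
    (auto simp: SigmaOp_eq_ketbra_sum Sigma_eigenvalue_pos)

lemma pinv_sqrt_SigmaOp_ketS:
  assumes R: "is_pinv_sqrt (index_set p k) (SigmaOp chi hPhi p k) R"
    and "x \<in> Ak k" "i \<in> index_set p k"
  shows "op_apply (index_set p k) R (ketS hPhi p k x w) i
       = complex_of_real (1 / sqrt (Sigma_eigenvalue (x, w))) * ketS hPhi p k x w i"
proof (cases "0 < eta hPhi p k x w")
  case True
  then have xw: "(x, w) \<in> ket_support hPhi p k"
    using \<open>x \<in> Ak k\<close> by (simp add: ket_support_def)
  have "op_apply (index_set p k) (SigmaOp chi hPhi p k) (ketS hPhi p k x w) j
      = complex_of_real (Sigma_eigenvalue (x, w)) * ketS hPhi p k x w j" for j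
    using op_apply_ketbra_sum_orthonormal[OF orthonormal_ketS finite_ket_support xw]
    by (simp add: SigmaOp_eq_ketbra_sum)
  then show ?thesis
    using is_pinv_sqrt_apply_eigenvector[OF R _ Sigma_eigenvalue_pos[OF xw] \<open>i \<in> index_set p k\<close>]
    by blast
next
  case False
  then show ?thesis
    by (simp add: op_apply_def ketS_eq_0)
qed

lemma pinv_sqrt_SigmaOp_state_vec:
  assumes R: "is_pinv_sqrt (index_set p k) (SigmaOp chi hPhi p k) R"
    and x: "x \<in> Ak k" and i: "i \<in> index_set p k"
  shows "op_apply (index_set p k) R (state_vec d x) i
       = complex_of_real (sqrt (real ((p * CARD('a)) ^ k) / real CARD('a))) * pgm_vec d x i"
proof -
  let ?c = "sqrt (real ((p * CARD('a)) ^ k) / real CARD('a))"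
  have ratio: "sqrt (real (eta hPhi p k x w)) * (1 / sqrt (Sigma_eigenvalue (x, w))) = ?c"
    if "0 < eta hPhi p k x w" for w
    using that p_pos by (simp add: Sigma_eigenvalue_def real_sqrt_divide real_sqrt_mult field_simps)
  have "op_apply (index_set p k) R (state_vec d x) i
      = (\<Sum>w\<in>UNIV. chi w d * complex_of_real (sqrt (real (eta hPhi p k x w))) *
           op_apply (index_set p k) R (ketS hPhi p k x w) i)"
    unfolding state_vec_def by (rule op_apply_sum)
  also have "\<dots> = (\<Sum>w\<in>UNIV. complex_of_real ?c * (chi w d * ketS hPhi p k x w i))"
  proof (rule sum.cong[OF refl])
    fix w
    show "chi w d * complex_of_real (sqrt (real (eta hPhi p k x w))) *
        op_apply (index_set p k) R (ketS hPhi p k x w) i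
        = complex_of_real ?c * (chi w d * ketS hPhi p k x w i)"
    proof (cases "0 < eta hPhi p k x w")
      case True
      have "chi w d * complex_of_real (sqrt (real (eta hPhi p k x w))) *
          op_apply (index_set p k) R (ketS hPhi p k x w) i
          = complex_of_real (sqrt (real (eta hPhi p k x w)) * (1 / sqrt (Sigma_eigenvalue (x, w)))) *
            (chi w d * ketS hPhi p k x w i)"
        by (simp only: pinv_sqrt_SigmaOp_ketS[OF R x i] of_real_mult mult_ac)
      then show ?thesis
        by (simp only: ratio[OF True])
    qed (simp add: ketS_eq_0 pinv_sqrt_SigmaOp_ketS[OF R x i])
  qed
  also have "\<dots> = complex_of_real ?c * pgm_vec d x i"
    unfolding pgm_vec_def by (simp add: sum_distrib_left)
  finally show ?thesis .
qed

lemma pretty_good_measurement_eq_Eop: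
  assumes R: "is_pinv_sqrt (index_set p k) (SigmaOp chi hPhi p k) R"
    and i: "i \<in> index_set p k" and i': "i' \<in> index_set p k"
  shows "op_mult (index_set p k) (op_mult (index_set p k) R (sigma chi hPhi p k d)) R i i'
       = Eop chi hPhi p k d i i'"
proof -
  let ?N = "real ((p * CARD('a)) ^ k)"
  let ?c = "sqrt (?N / real CARD('a))"
  have "op_mult (index_set p k) (op_mult (index_set p k) R (sigma chi hPhi p k d)) R i i'
      = ketbra_sum (Ak k) (\<lambda>_. 1 / ?N) (\<lambda>x. op_apply (index_set p k) R (state_vec d x)) i i'"
    unfolding sigma_eq_ketbra_sum
    by (rule op_mult_sandwich_ketbra_sum[OF is_pinv_sqrt_hermitian[OF R] i i'])
  also have "\<dots> = ketbra_sum (Ak k) (\<lambda>_. 1 / ?N) (\<lambda>x j. complex_of_real ?c * pgm_vec d x j) i i'"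
    by (rule ketbra_sum_cong) (simp add: pinv_sqrt_SigmaOp_state_vec[OF R _ i]
        pinv_sqrt_SigmaOp_state_vec[OF R _ i'])
  also have "\<dots> = Eop chi hPhi p k d i i'"
    unfolding ketbra_sum_scale Eop_eq_ketbra_sum using p_pos by simp
  finally show ?thesis .
qed

lemma vinner_state_vec:
  assumes "x \<in> Ak k"
  shows "vinner (index_set p k) (state_vec d x) (state_vec d x) = of_nat (p ^ k)"
proof -
  let ?s = "\<lambda>w. complex_of_real (sqrt (real (eta hPhi p k x w)))"
  have "vinner (index_set p k) (state_vec d x) (state_vec d x)
      = (\<Sum>w\<in>UNIV. if 0 < eta hPhi p k x w then cnj (chi w d * ?s w) * (chi w d * ?s w) else 0)"
    unfolding state_vec_def vinner_ketS_combination[OF assms] if_P[OF refl] ..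
  also have "\<dots> = (\<Sum>w\<in>UNIV. of_nat (eta hPhi p k x w))"
    by (intro sum.cong refl) (simp only: cnj_mult_mult_cancel, simp flip: of_real_mult)
  also have "\<dots> = of_nat (p ^ k)"
    by (simp flip: of_nat_sum add: sum_eta)
  finally show ?thesis .
qed

lemma vinner_pgm_vec_state_vec:
  assumes "x \<in> Ak k"
  shows "vinner (index_set p k) (pgm_vec d x) (state_vec d y)
       = (if x = y then (\<Sum>w\<in>UNIV. complex_of_real (sqrt (real (eta hPhi p k x w)))) else 0)"
proof (cases "x = y")
  case True
  let ?s = "\<lambda>w. complex_of_real (sqrt (real (eta hPhi p k x w)))"
  have "vinner (index_set p k) (pgm_vec d x) (state_vec d y)
      = (\<Sum>w\<in>UNIV. if 0 < eta hPhi p k x w then cnj (chi w d) * (chi w d * ?s w) else 0)"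
    unfolding True state_vec_def pgm_vec_def vinner_ketS_combination[OF assms[unfolded True]] if_P[OF refl]
    by simp
  also have "\<dots> = (\<Sum>w\<in>UNIV. ?s w)"
    by (intro sum.cong refl) (simp add: cnj_mult_cancel)
  finally show ?thesis
    using True by simp
next
  case False
  then show ?thesis
    by (simp add: state_vec_def pgm_vec_def vinner_ketS_combination[OF assms])
qed

lemma vinner_state_vec_pgm_vec:
  assumes "x \<in> Ak k"
  shows "vinner (index_set p k) (state_vec d y) (pgm_vec d x)
       = (if x = y then (\<Sum>w\<in>UNIV. complex_of_real (sqrt (real (eta hPhi p k x w)))) else 0)"
proof -
  have "vinner (index_set p k) (state_vec d y) (pgm_vec d x)
      = cnj (vinner (index_set p k) (pgm_vec d x) (state_vec d y))"
    by (rule cnj_vinner[symmetric])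
  then show ?thesis
    by (simp add: vinner_pgm_vec_state_vec[OF assms])
qed

lemma density_op_sigma: "density_op (index_set p k) (sigma chi hPhi p k d)"
proof -
  let ?N = "(p * CARD('a)) ^ k"
  have "op_trace (index_set p k) (ketbra_sum (Ak k) (\<lambda>_. 1 / real ?N) (state_vec d))
      = of_nat (card (Ak k :: 'a list set)) * (1 / of_nat ?N) * of_nat (p ^ k)"
    unfolding op_trace_ketbra_sum by (simp add: vinner_state_vec)
  also have "\<dots> = 1"
    using p_pos by (simp add: card_Ak power_mult_distrib)
  finally have "op_trace (index_set p k) (ketbra_sum (Ak k) (\<lambda>_. 1 / real ?N) (state_vec d)) = 1" .
  moreover have "psd_op (index_set p k) (ketbra_sum (Ak k) (\<lambda>_. 1 / real ?N) (state_vec d))"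
    by (rule psd_op_ketbra_sum) simp
  ultimately show ?thesis
    unfolding density_op_def sigma_eq_ketbra_sum using hermitian_op_ketbra_sum by blast
qed

lemma op_trace_Eop_sigma:
  "op_trace (index_set p k) (op_mult (index_set p k) (Eop chi hPhi p k d) (sigma chi hPhi p k d))
     = of_nat p / of_nat ((p * CARD('a)) ^ (k + 1)) *
       (\<Sum>x\<in>Ak k. (\<Sum>w\<in>UNIV. complex_of_real (sqrt (real (eta hPhi p k x w)))) ^ 2)"
proof -
  let ?Q = "\<lambda>x. \<Sum>w\<in>UNIV. complex_of_real (sqrt (real (eta hPhi p k x w)))"
  let ?c = "1 / real CARD('a) * (1 / real ((p * CARD('a)) ^ k))"
  have "op_trace (index_set p k) (op_mult (index_set p k) (Eop chi hPhi p k d) (sigma chi hPhi p k d))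
      = (\<Sum>x\<in>Ak k. \<Sum>y\<in>Ak k. complex_of_real ?c * vinner (index_set p k) (pgm_vec d x) (state_vec d y)
                                * vinner (index_set p k) (state_vec d y) (pgm_vec d x))"
    unfolding Eop_eq_ketbra_sum sigma_eq_ketbra_sum op_trace_op_mult_ketbra_sum ..
  also have "\<dots> = (\<Sum>x\<in>Ak k. \<Sum>y\<in>Ak k. if x = y then complex_of_real ?c * ?Q x ^ 2 else 0)"
    by (intro sum.cong refl)
      (simp add: vinner_pgm_vec_state_vec vinner_state_vec_pgm_vec power2_eq_square)
  also have "\<dots> = (\<Sum>x\<in>Ak k. complex_of_real ?c * ?Q x ^ 2)"
    by (simp add: finite_Ak)
  also have "\<dots> = of_nat p / of_nat ((p * CARD('a)) ^ (k + 1)) * (\<Sum>x\<in>Ak k. ?Q x ^ 2)"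
    using p_pos by (simp add: sum_distrib_left)
  finally show ?thesis .
qed

end

theorem mainTheorem6:
  fixes chi :: "'a::{ab_group_add,finite} \<Rightarrow> 'a \<Rightarrow> complex"
    and phi :: "'a \<Rightarrow> 'a"
    and hPhi :: "nat \<Rightarrow> 'a \<Rightarrow> 'a"
    and p k :: nat
  assumes p_prime: "prime p"
    and k_pos: "k \<ge> 1"
    and chi_nonzero: "\<And>x y. chi x y \<noteq> 0"
    and chi_hom: "\<And>x y z. chi x (y + z) = chi x y * chi x z"
    and chi_add: "\<And>x x' y. chi (x + x') y = chi x y * chi x' y"
    and chi_sym: "\<And>x y. chi x y = chi y x"
    and chi_inj: "inj chi"
    and phi_bij: "bij phi"
    and phi_add: "\<And>a b. phi (a + b) = phi a + phi b"
    and phi_order: "phi ^^ p = id"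
    and hPhi_dual: "\<And>b x d. b < p \<Longrightarrow> chi x (Phi phi b d) = chi (hPhi b x) d"
  shows
    "SigmaOp chi hPhi p k =
       (\<lambda>i j. (of_nat CARD('a) / of_nat ((p * CARD('a)) ^ k)) *
          (\<Sum>x\<in>Ak k. \<Sum>w\<in>UNIV. of_nat (eta hPhi p k x w) *
             ketbra (ketS hPhi p k x w) (ketS hPhi p k x w) i j))
     \<and> (\<forall>d. density_op (index_set p k) (sigma chi hPhi p k d))
     \<and> (\<exists>R. is_pinv_sqrt (index_set p k) (SigmaOp chi hPhi p k) R)
     \<and> (\<forall>R. is_pinv_sqrt (index_set p k) (SigmaOp chi hPhi p k) R \<longrightarrow>
          (\<forall>j. \<forall>i\<in>index_set p k. \<forall>i'\<in>index_set p k.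
             op_mult (index_set p k) (op_mult (index_set p k) R (sigma chi hPhi p k j)) R i i'
               = Eop chi hPhi p k j i i'))
     \<and> (\<forall>d. op_trace (index_set p k) (op_mult (index_set p k) (Eop chi hPhi p k d) (sigma chi hPhi p k d))
           = of_nat p / of_nat ((p * CARD('a)) ^ (k + 1)) *
             (\<Sum>x\<in>Ak k. (\<Sum>w\<in>UNIV. complex_of_real (sqrt (real (eta hPhi p k x w)))) ^ 2))"
proof -
  interpret hidden_subgroup_states chi hPhi p k
    using chi_nonzero chi_hom chi_add chi_inj prime_gt_0_nat[OF p_prime] by unfold_locales
  show ?thesis
    using SigmaOp_eq density_op_sigma pinv_sqrt_SigmaOp_exists pretty_good_measurement_eq_Eop
      op_trace_Eop_sigma by blast
qed

end
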